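(* For $d=2$ and $U\in C^\infty(\mathbb{T}^2)$, $Q(U)={}^tP\,D(-U)\,P$, where $P=\begin{pmatrix}0&-1\\1&0\end{pmatrix}$.
   Context: $\mathbb{T}^2=\mathbb{R}^2/\mathbb{Z}^2$. $D(W)$: ${}^tlD(W)l=\inf_{f\in C^\infty(\mathbb{T}^2)}\int|l-\nabla f|^2e^{-2W}dx/\int e^{-2W}$. $\mathcal{F}_{sol}=\{p\in(C^\infty(\mathbb{T}^2))^2:\operatorname{div}p=0,\ \int p\,dx=0\}$; $Q(U)$ is the symmetric matrix with ${}^tlQ(U)l=\inf_{p\in\mathcal{F}_{sol}}\int|l-p|^2e^{2U}dx/\int e^{2U}dx$. *)

theory Defs
  imports "HOL-Analysis.Analysis"
begin

text \<open>Functions on the torus T^2 = R^2/Z^2 are represented as Z^2-periodic functions on R^2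
  (here the Euclidean space real^2); integrals over T^2 are integrals over the unit square.\<close>

definition partial :: "2 \<Rightarrow> (real^2 \<Rightarrow> real) \<Rightarrow> real^2 \<Rightarrow> real" where
  "partial i f x = frechet_derivative f (at x) (axis i 1)"

fun Ck :: "nat \<Rightarrow> (real^2 \<Rightarrow> real) \<Rightarrow> bool" where
  "Ck 0 f = continuous_on UNIV f"
| "Ck (Suc k) f = ((\<forall>x. f differentiable (at x)) \<and> continuous_on UNIV f
                    \<and> (\<forall>i. Ck k (partial i f)))"

definition smooth :: "(real^2 \<Rightarrow> real) \<Rightarrow> bool" where
  "smooth f \<longleftrightarrow> (\<forall>k. Ck k f)"

definition periodic :: "(real^2 \<Rightarrow> 'b) \<Rightarrow> bool" where
  "periodic f \<longleftrightarrow> (\<forall>x i. f (x + axis i 1) = f x)"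

definition Cinf_T2 :: "(real^2 \<Rightarrow> real) set" where
  "Cinf_T2 = {f. smooth f \<and> periodic f}"

definition grad :: "(real^2 \<Rightarrow> real) \<Rightarrow> real^2 \<Rightarrow> real^2" where
  "grad f x = (\<chi> i. partial i f x)"

definition div2 :: "(real^2 \<Rightarrow> real^2) \<Rightarrow> real^2 \<Rightarrow> real" where
  "div2 p x = (\<Sum>i\<in>UNIV. partial i (\<lambda>y. p y $ i) x)"

definition torus_int :: "(real^2 \<Rightarrow> 'b::euclidean_space) \<Rightarrow> 'b" where
  "torus_int g = integral (cbox (vec 0) (vec 1)) g"

definition F_sol :: "(real^2 \<Rightarrow> real^2) set" where
  "F_sol = {p. (\<forall>i. (\<lambda>x. p x $ i) \<in> Cinf_T2) \<and> (\<forall>x. div2 p x = 0) \<and> torus_int p = 0}"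

definition qD :: "(real^2 \<Rightarrow> real) \<Rightarrow> real^2 \<Rightarrow> real" where
  "qD W l = (INF f\<in>Cinf_T2. torus_int (\<lambda>x. (norm (l - grad f x))\<^sup>2 * exp (-2 * W x))
                            / torus_int (\<lambda>x. exp (-2 * W x)))"

definition qQ :: "(real^2 \<Rightarrow> real) \<Rightarrow> real^2 \<Rightarrow> real" where
  "qQ U l = (INF p\<in>F_sol. torus_int (\<lambda>x. (norm (l - p x))\<^sup>2 * exp (2 * U x))
                            / torus_int (\<lambda>x. exp (2 * U x)))"

definition Dmat :: "(real^2 \<Rightarrow> real) \<Rightarrow> real^2^2" where
  "Dmat W = (THE M. transpose M = M \<and> (\<forall>l. l \<bullet> (M *v l) = qD W l))"

definition Qmat :: "(real^2 \<Rightarrow> real) \<Rightarrow> real^2^2" where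
  "Qmat U = (THE M. transpose M = M \<and> (\<forall>l. l \<bullet> (M *v l) = qQ U l))"

definition Pmat :: "real^2^2" where
  "Pmat = (\<chi> i j. if i = 1 \<and> j = 2 then -1 else if i = 2 \<and> j = 1 then 1 else 0)"

end

theory Submission
  imports Defs
begin

text \<open>In two dimensions the rotation P identifies solenoidal fields with gradients: for periodic f,
  the rotated gradient rot f = P^T grad f is divergence-free with zero mean, and conversely, if p is
  divergence-free with zero mean, then P p is curl-free with zero mean, so the radial (Poincare)
  potential of P p is periodic and p = rot g. Since P is an isometry, the infimum defining Q(U) at l
  is the infimum defining D(-U) at P l. Both infima are nonnegative, homogeneous of degree two and
  satisfy the parallelogram law (sums and differences of competitors are competitors), so they are
  quadratic forms, and the symmetric matrices representing them are unique.\<close>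

section \<open>Quadratic forms and symmetric matrices\<close>

lemma additive_bounded_imp_linear:
  fixes k :: "real \<Rightarrow> real"
  assumes add: "\<And>s t. k (s + t) = k s + k t"
    and bounded: "\<And>s. s \<in> {0..1} \<Longrightarrow> \<bar>k s\<bar> \<le> M"
  shows "k s = s * k 1"
proof -
  define h where "h s = k s - s * k 1" for s
  have h_add: "h (s + t) = h s + h t" for s t
    unfolding h_def using add by (simp add: algebra_simps)
  have h_0: "h 0 = 0"
    using h_add[of 0 0] by simp
  have h_of_nat_mult: "h (of_nat n * s) = of_nat n * h s" for n s
    by (induction n) (simp_all add: h_0 h_add distrib_right)
  have h_of_nat: "h (of_nat m) = 0" for m
    using h_of_nat_mult[of m 1] by (simp add: h_def)
  have h_uminus: "h (- s) = - h s" for s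
    using h_add[of s "- s"] h_0 by simp
  have h_of_int: "h (of_int n) = 0" for n
  proof (cases "0 \<le> n")
    case True
    then show ?thesis
      using h_of_nat[of "nat n"] by simp
  next
    case False
    then show ?thesis
      using h_of_nat[of "nat (- n)"] h_uminus[of "of_nat (nat (- n))"] by simp
  qed
  \<comment> \<open>By additivity, h has period 1, so it is bounded everywhere.\<close>
  have h_bounded: "\<bar>h s\<bar> \<le> M + \<bar>k 1\<bar>" for s
  proof -
    have frac: "frac s \<in> {0..1}"
      using frac_lt_1[of s] frac_ge_0[of s] by simp
    have "h s = h (frac s) + h (of_int \<lfloor>s\<rfloor>)"
      by (simp add: frac_def flip: h_add)
    also have "\<dots> = k (frac s) - frac s * k 1"
      unfolding h_of_int by (simp add: h_def)
    finally have "\<bar>h s\<bar> \<le> \<bar>k (frac s)\<bar> + frac s * \<bar>k 1\<bar>"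
      using abs_triangle_ineq4[of "k (frac s)" "frac s * k 1"] by (simp add: abs_mult)
    also have "\<dots> \<le> M + \<bar>k 1\<bar>"
      using bounded[OF frac] frac by (intro add_mono mult_left_le_one_le) auto
    finally show ?thesis .
  qed
  have "h s = 0"
  proof (rule ccontr)
    assume "h s \<noteq> 0"
    then obtain n :: nat where "(M + \<bar>k 1\<bar>) / \<bar>h s\<bar> < of_nat n"
      using reals_Archimedean2 by blast
    with \<open>h s \<noteq> 0\<close> have "M + \<bar>k 1\<bar> < \<bar>h (of_nat n * s)\<bar>"
      by (simp add: h_of_nat_mult abs_mult divide_less_eq)
    with h_bounded show False
      by (meson not_le)
  qed
  then show ?thesis
    by (simp add: h_def)
qed

text \<open>Jordan--von Neumann: for a nonnegative function that is homogeneous of degree two and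
  satisfies the parallelogram law, the polar form is bilinear. Nonnegativity takes the place of the
  usual continuity assumption: it bounds the polar form on bounded sets.\<close>

lemma parallelogram_law_polar_linear:
  fixes \<phi> :: "'a::real_vector \<Rightarrow> real"
  assumes hom: "\<And>t a. \<phi> (t *\<^sub>R a) = t\<^sup>2 * \<phi> a"
    and parallelogram: "\<And>a b. \<phi> (a + b) + \<phi> (a - b) = 2 * \<phi> a + 2 * \<phi> b"
    and nonneg: "\<And>a. 0 \<le> \<phi> a"
  shows "linear (\<lambda>x. \<phi> (x + y) - \<phi> (x - y))"
proof -
  define B where "B x = \<phi> (x + y) - \<phi> (x - y)" for x
  have B_0: "B 0 = 0"
    using hom[of "-1" y] by (simp add: B_def)
  have B_midpoint: "B (x + z) + B (x - z) = 2 * B x" for x z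
    using parallelogram[of "x + y" z] parallelogram[of "x - y" z]
    by (simp add: B_def algebra_simps)
  have B_add: "B (u + v) = B u + B v" for u v
  proof -
    define x where "x = (1/2) *\<^sub>R (u + v)"
    define z where "z = (1/2) *\<^sub>R (u - v)"
    have "x + z = u" "x - z = v" "x + x = u + v"
      unfolding x_def z_def by (simp_all add: algebra_simps flip: scaleR_add_left)
    then show ?thesis
      using B_midpoint[of x z] B_midpoint[of x x] B_0 by simp
  qed
  have B_scale: "B (s *\<^sub>R x) = s * B x" for s x
  proof -
    have "B (s *\<^sub>R x) = s * B (1 *\<^sub>R x)"
    proof (rule additive_bounded_imp_linear[where k = "\<lambda>s. B (s *\<^sub>R x)"])
      show "B ((s + t) *\<^sub>R x) = B (s *\<^sub>R x) + B (t *\<^sub>R x)" for s t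
        by (simp add: scaleR_add_left B_add)
    next
      fix s :: real
      assume "s \<in> {0..1}"
      then have "s\<^sup>2 * \<phi> x \<le> \<phi> x"
        using nonneg[of x] by (intro mult_left_le_one_le) (auto simp: power_le_one)
      then show "\<bar>B (s *\<^sub>R x)\<bar> \<le> 2 * \<phi> x + 2 * \<phi> y"
        using parallelogram[of "s *\<^sub>R x" y] nonneg[of "s *\<^sub>R x + y"] nonneg[of "s *\<^sub>R x - y"]
        by (simp add: B_def hom)
    qed
    then show ?thesis
      by simp
  qed
  have "linear B"
    by (rule linearI) (simp_all add: B_add B_scale)
  then show ?thesis
    by (simp add: B_def[abs_def])
qed

lemma parallelogram_law_imp_symmetric_matrix:
  fixes \<phi> :: "real^'n \<Rightarrow> real"
  assumes hom: "\<And>t a. \<phi> (t *\<^sub>R a) = t\<^sup>2 * \<phi> a"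
    and parallelogram: "\<And>a b. \<phi> (a + b) + \<phi> (a - b) = 2 * \<phi> a + 2 * \<phi> b"
    and nonneg: "\<And>a. 0 \<le> \<phi> a"
  shows "\<exists>M. transpose M = M \<and> (\<forall>l. l \<bullet> (M *v l) = \<phi> l)"
proof -
  define B where "B x y = \<phi> (x + y) - \<phi> (x - y)" for x y
  have B_sym: "B x y = B y x" for x y
    using hom[of "-1" "x - y"] by (simp add: B_def add.commute)
  have B_expand: "B x y = (\<Sum>i\<in>UNIV. x $ i * B (axis i 1) y)" for x y
  proof -
    have "linear (\<lambda>x. B x y)"
      unfolding B_def by (rule parallelogram_law_polar_linear[OF hom parallelogram nonneg])
    then have "B (\<Sum>i\<in>UNIV. x $ i *\<^sub>R axis i 1) y = (\<Sum>i\<in>UNIV. x $ i * B (axis i 1) y)"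
      by (simp add: linear_sum[of "\<lambda>x. B x y"] linear_scale[of "\<lambda>x. B x y"] o_def)
    then show ?thesis
      using basis_expansion[of x] by (simp add: scalar_mult_eq_scaleR)
  qed
  have B_diag: "B l l = 4 * \<phi> l" for l
    using hom[of 2 l] hom[of 0 l] by (simp add: B_def scaleR_2)
  define M :: "real^'n^'n" where "M = (\<chi> i j. B (axis i 1) (axis j 1) / 4)"
  have "transpose M = M"
    by (simp add: M_def transpose_def vec_eq_iff B_sym)
  moreover have "l \<bullet> (M *v l) = \<phi> l" for l
  proof -
    have M_row: "(M *v l) $ i = B (axis i 1) l / 4" for i
    proof -
      have "B (axis i 1) l = (\<Sum>j\<in>UNIV. l $ j * B (axis j 1) (axis i 1))"
        using B_sym B_expand by metis
      also have "\<dots> = (\<Sum>j\<in>UNIV. B (axis i 1) (axis j 1) * l $ j)"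
        using B_sym by (intro sum.cong) auto
      finally show ?thesis
        by (simp add: M_def matrix_vector_mult_def sum_divide_distrib)
    qed
    have "l \<bullet> (M *v l) = (\<Sum>i\<in>UNIV. l $ i * B (axis i 1) l) / 4"
      unfolding inner_vec_def M_row by (simp add: sum_divide_distrib)
    also have "\<dots> = \<phi> l"
      by (simp add: B_expand[of l l, symmetric] B_diag)
    finally show ?thesis .
  qed
  ultimately show ?thesis
    by blast
qed

lemma symmetric_matrix_polarization:
  fixes A :: "real^'n^'n"
  assumes "transpose A = A"
  shows "4 * (x \<bullet> (A *v y)) = (x + y) \<bullet> (A *v (x + y)) - (x - y) \<bullet> (A *v (x - y))"
proof -
  have "y \<bullet> (A *v x) = x \<bullet> (A *v y)"
    using dot_lmul_matrix[of x A y] vector_transpose_matrix[of x A] assms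
    by (simp add: inner_commute)
  then show ?thesis
    by (simp add: matrix_vector_right_distrib matrix_vector_mult_diff_distrib
        inner_add_left inner_add_right inner_diff_left inner_diff_right)
qed

lemma symmetric_matrix_eqI:
  fixes A B :: "real^'n^'n"
  assumes "transpose A = A" "transpose B = B" "\<And>l. l \<bullet> (A *v l) = l \<bullet> (B *v l)"
  shows "A = B"
proof -
  have "x \<bullet> (A *v y) = x \<bullet> (B *v y)" for x y
    using symmetric_matrix_polarization[OF assms(1), of x y]
      symmetric_matrix_polarization[OF assms(2), of x y] assms(3) by simp
  from this[of "axis i 1" "axis j 1" for i j] show ?thesis
    by (simp add: vec_eq_iff matrix_vector_mult_basis column_def inner_axis')
qed

lemma the_symmetric_matrix_eq:
  fixes M :: "real^'n^'n"
  assumes "transpose M = M" "\<And>l. l \<bullet> (M *v l) = \<phi> l"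
  shows "(THE M. transpose M = M \<and> (\<forall>l. l \<bullet> (M *v l) = \<phi> l)) = M"
  by (rule the_equality) (use assms in \<open>auto intro!: symmetric_matrix_eqI\<close>)

lemma norm_parallelogram:
  fixes a b :: "'a::real_inner"
  shows "(norm (a + b))\<^sup>2 + (norm (a - b))\<^sup>2 = 2 * (norm a)\<^sup>2 + 2 * (norm b)\<^sup>2"
  by (simp add: power2_norm_eq_inner inner_add_left inner_add_right inner_diff_left inner_diff_right
      inner_commute)

lemma inner_transpose_mult_vec:
  fixes A :: "real^'n^'m"
  shows "x \<bullet> (transpose A *v y) = (A *v x) \<bullet> y"
  by (metis dot_lmul_matrix inner_commute transpose_matrix_vector)

section \<open>Differential calculus on the plane\<close>

lemma smooth_imp_Ck: "smooth f \<Longrightarrow> Ck k f"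
  by (simp add: smooth_def)

lemma smooth_differentiable: "smooth f \<Longrightarrow> f differentiable (at x)"
  using smooth_imp_Ck[of f 1] by simp

lemma smooth_continuous_on: "smooth f \<Longrightarrow> continuous_on S f"
  using smooth_imp_Ck[of f 0] continuous_on_subset by fastforce

lemma continuous_on_compose_smooth: "smooth f \<Longrightarrow> continuous_on S g \<Longrightarrow> continuous_on S (\<lambda>x. f (g x))"
  by (rule continuous_on_compose2[OF smooth_continuous_on]) auto

lemma smooth_partial: "smooth f \<Longrightarrow> smooth (partial i f)"
  unfolding smooth_def by (metis Ck.simps(2))

lemma partial_eq_derivative: "(f has_derivative f') (at x) \<Longrightarrow> partial i f x = f' (axis i 1)"
  unfolding partial_def by (simp add: frechet_derivative_at[symmetric])

lemma grad_inner_axis: "grad f x \<bullet> axis i 1 = partial i f x"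
  by (simp add: inner_axis grad_def)

lemma has_derivative_grad:
  assumes "f differentiable (at x)"
  shows "(f has_derivative (\<lambda>h. grad f x \<bullet> h)) (at x)"
proof -
  let ?D = "frechet_derivative f (at x)"
  have D: "(f has_derivative ?D) (at x)"
    using assms frechet_derivative_works by blast
  have "?D h = grad f x \<bullet> h" for h
  proof -
    have "h = h$1 *\<^sub>R axis 1 1 + h$2 *\<^sub>R axis 2 1"
      by (simp add: vec_eq_iff forall_2 axis_def)
    then have "?D h = ?D (h$1 *\<^sub>R axis 1 1 + h$2 *\<^sub>R axis 2 1)"
      by metis
    also have "\<dots> = h$1 * ?D (axis 1 1) + h$2 * ?D (axis 2 1)"
      using has_derivative_linear[OF D] by (simp add: linear_add linear_scale)
    finally show ?thesis
      by (simp add: inner_vec_def sum_2 grad_def partial_def)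
  qed
  then show ?thesis
    using D by (metis ext)
qed

lemma partial_lincomb:
  assumes "\<And>x. f differentiable (at x)" "\<And>x. g differentiable (at x)"
  shows "partial i (\<lambda>x. a * f x + b * g x) x = a * partial i f x + b * partial i g x"
proof -
  have "((\<lambda>x. a * f x + b * g x) has_derivative (\<lambda>h. a * (grad f x \<bullet> h) + b * (grad g x \<bullet> h))) (at x)"
    using has_derivative_grad[OF assms(1)] has_derivative_grad[OF assms(2)]
    by (auto intro!: derivative_eq_intros)
  from partial_eq_derivative[OF this] show ?thesis
    by (simp add: grad_inner_axis)
qed

lemma partial_uminus:
  assumes "\<And>x. f differentiable (at x)"
  shows "partial i (\<lambda>x. - f x) x = - partial i f x"
  using partial_lincomb[OF assms assms, of i "-1" 0 x] by simp

lemma partial_const: "partial i (\<lambda>x. c) x = 0"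
  using partial_eq_derivative[OF has_derivative_const] by simp

lemma Ck_lincomb: "Ck k f \<Longrightarrow> Ck k g \<Longrightarrow> Ck k (\<lambda>x. a * f x + b * g x)"
proof (induction k arbitrary: f g)
  case 0
  then show ?case
    by (simp add: continuous_on_add continuous_on_mult_left)
next
  case (Suc k)
  have differentiable: "\<And>x. f differentiable (at x)" "\<And>x. g differentiable (at x)"
    and continuous: "continuous_on UNIV f" "continuous_on UNIV g"
    and partials: "\<And>i. Ck k (partial i f)" "\<And>i. Ck k (partial i g)"
    using Suc.prems by (simp_all only: Ck.simps)
  have partial_eq: "partial i (\<lambda>x. a * f x + b * g x) = (\<lambda>x. a * partial i f x + b * partial i g x)"
    for i by (rule ext) (rule partial_lincomb[OF differentiable])
  have "(\<lambda>x. a * f x + b * g x) differentiable (at x)" for x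
    using differentiable by simp
  moreover have "continuous_on UNIV (\<lambda>x. a * f x + b * g x)"
    using continuous by (simp add: continuous_on_add continuous_on_mult_left)
  moreover have "Ck k (partial i (\<lambda>x. a * f x + b * g x))" for i
    unfolding partial_eq by (rule Suc.IH[OF partials])
  ultimately show ?case
    by (simp only: Ck.simps) blast
qed

lemma Ck_const: "Ck k (\<lambda>x. c)"
  by (induction k arbitrary: c) (simp_all add: partial_const[abs_def])

lemma smooth_lincomb: "smooth f \<Longrightarrow> smooth g \<Longrightarrow> smooth (\<lambda>x. a * f x + b * g x)"
  by (simp add: smooth_def Ck_lincomb)

lemma periodic_partial:
  assumes "periodic f" "\<And>x. f differentiable (at x)"
  shows "periodic (partial i f)"
  unfolding periodic_def
proof (intro allI)
  fix x j
  let ?a = "axis j 1 :: real^2"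
  have "((\<lambda>y. y + ?a) has_derivative (\<lambda>h. h)) (at x)"
    by (auto intro!: derivative_eq_intros)
  from has_derivative_compose[OF this has_derivative_grad[OF assms(2)]]
  have "((\<lambda>y. f (y + ?a)) has_derivative (\<lambda>h. grad f (x + ?a) \<bullet> h)) (at x)" .
  moreover have "f (y + ?a) = f y" for y
    using assms(1) unfolding periodic_def by blast
  ultimately have "(f has_derivative (\<lambda>h. grad f (x + ?a) \<bullet> h)) (at x)"
    by (simp only:)
  from partial_eq_derivative[OF this] show "partial i f (x + ?a) = partial i f x"
    by (simp add: grad_inner_axis)
qed

lemma Cinf_T2_partial: "f \<in> Cinf_T2 \<Longrightarrow> partial i f \<in> Cinf_T2"
  by (simp add: Cinf_T2_def smooth_partial periodic_partial smooth_differentiable)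

lemma Cinf_T2_lincomb: "f \<in> Cinf_T2 \<Longrightarrow> g \<in> Cinf_T2 \<Longrightarrow> (\<lambda>x. a * f x + b * g x) \<in> Cinf_T2"
  unfolding Cinf_T2_def periodic_def by (auto intro: smooth_lincomb)

lemma Cinf_T2_uminus: "f \<in> Cinf_T2 \<Longrightarrow> (\<lambda>x. - f x) \<in> Cinf_T2"
  using Cinf_T2_lincomb[of f f "-1" 0] by simp

lemma Cinf_T2_cmult: "f \<in> Cinf_T2 \<Longrightarrow> (\<lambda>x. t * f x) \<in> Cinf_T2"
  using Cinf_T2_lincomb[of f f t 0] by simp

lemma Cinf_T2_add: "f \<in> Cinf_T2 \<Longrightarrow> g \<in> Cinf_T2 \<Longrightarrow> (\<lambda>x. f x + g x) \<in> Cinf_T2"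
  using Cinf_T2_lincomb[of f g 1 1] by simp

lemma Cinf_T2_diff: "f \<in> Cinf_T2 \<Longrightarrow> g \<in> Cinf_T2 \<Longrightarrow> (\<lambda>x. f x - g x) \<in> Cinf_T2"
  using Cinf_T2_lincomb[of f g 1 "-1"] by simp

lemma Cinf_T2_const: "(\<lambda>x. c) \<in> Cinf_T2"
  by (simp add: Cinf_T2_def smooth_def periodic_def Ck_const)

lemma grad_lincomb:
  assumes "smooth f" "smooth g"
  shows "grad (\<lambda>x. a * f x + b * g x) x = a *\<^sub>R grad f x + b *\<^sub>R grad g x"
  using assms by (simp add: grad_def partial_lincomb smooth_differentiable vec_eq_iff)

lemma grad_cmult: "smooth f \<Longrightarrow> grad (\<lambda>x. t * f x) x = t *\<^sub>R grad f x"
  using grad_lincomb[of f f t 0] by simp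

lemma grad_add: "smooth f \<Longrightarrow> smooth g \<Longrightarrow> grad (\<lambda>x. f x + g x) x = grad f x + grad g x"
  using grad_lincomb[of f g 1 1] by simp

lemma grad_diff: "smooth f \<Longrightarrow> smooth g \<Longrightarrow> grad (\<lambda>x. f x - g x) x = grad f x - grad g x"
  using grad_lincomb[of f g 1 "-1"] by simp

lemma grad_const: "grad (\<lambda>x. c) x = 0"
  by (simp add: grad_def partial_const vec_eq_iff)

lemma continuous_on_grad: "smooth f \<Longrightarrow> continuous_on S (grad f)"
  unfolding grad_def[abs_def]
  by (intro continuous_on_vec_lambda smooth_continuous_on smooth_partial)

lemma continuous_on_vector_field:
  fixes q :: "real^2 \<Rightarrow> real^2"
  assumes "\<And>i. smooth (\<lambda>y. q y $ i)"
  shows "continuous_on S q"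
  using continuous_on_vec_lambda[of S "\<lambda>i y. q y $ i"] assms smooth_continuous_on by simp

lemma has_real_derivative_along_line:
  assumes "smooth f"
  shows "((\<lambda>s. f (x + s *\<^sub>R v)) has_real_derivative (grad f (x + s *\<^sub>R v) \<bullet> v)) (at s within S)"
proof -
  have "((\<lambda>s. x + s *\<^sub>R v) has_derivative (\<lambda>t. t *\<^sub>R v)) (at s within S)"
    by (auto intro!: derivative_eq_intros)
  from has_derivative_compose[OF this has_derivative_grad[OF smooth_differentiable[OF assms]]]
  have "((\<lambda>s. f (x + s *\<^sub>R v)) has_derivative (\<lambda>t. grad f (x + s *\<^sub>R v) \<bullet> (t *\<^sub>R v)))
      (at s within S)" .
  then show ?thesis
    unfolding has_field_derivative_def by (simp add: mult.commute[of _ "grad f (x + s *\<^sub>R v) \<bullet> v"])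
qed

lemma has_real_derivative_along_axis:
  assumes "smooth f"
  shows "((\<lambda>s. f (x + s *\<^sub>R axis i 1)) has_real_derivative partial i f (x + s *\<^sub>R axis i 1))
    (at s within S)"
  using has_real_derivative_along_line[OF assms, of x "axis i 1"] by (simp add: grad_inner_axis)

lemma integral_partial_along_axis:
  assumes "smooth f" "0 \<le> b"
  shows "integral {0..b} (\<lambda>t. partial i f (x + t *\<^sub>R axis i 1)) = f (x + b *\<^sub>R axis i 1) - f x"
proof -
  have "((\<lambda>t. partial i f (x + t *\<^sub>R axis i 1)) has_integral
          f (x + b *\<^sub>R axis i 1) - f (x + 0 *\<^sub>R axis i 1)) {0..b}"
    using has_real_derivative_along_axis[OF assms(1)] assms(2)
    by (intro fundamental_theorem_of_calculus) (auto simp: has_real_derivative_iff_has_vector_derivative)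
  then show ?thesis
    by (simp add: integral_unique)
qed

lemma partial_increment_eq_integral_mixed:
  assumes "smooth f" "0 \<le> b"
  shows "partial 1 f (p + b *\<^sub>R axis 2 1) - partial 1 f p
    = integral {0..b} (\<lambda>t. partial 1 (partial 2 f) (p + t *\<^sub>R axis 2 1))"
proof -
  define y where "y a t = p + t *\<^sub>R axis 2 1 + a *\<^sub>R axis 1 1" for a t
  have smooth_2: "smooth (partial 2 f)" and smooth_12: "smooth (partial 1 (partial 2 f))"
    using assms(1) smooth_partial by blast+
  have continuous_y: "continuous_on S (\<lambda>z. y (fst z) (snd z))" for S
    unfolding y_def by (auto intro!: continuous_intros)
  have continuous_y_a: "continuous_on T (y a)" for T a
    unfolding y_def by (auto intro!: continuous_intros)
  have "((\<lambda>a. integral (cbox 0 b) (\<lambda>t. partial 2 f (y a t))) has_vector_derivative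
          integral (cbox 0 b) (\<lambda>t. partial 1 (partial 2 f) (y 0 t))) (at 0 within UNIV)"
  proof (rule leibniz_rule_vector_derivative)
    fix a t :: real
    show "((\<lambda>a. partial 2 f (y a t)) has_vector_derivative partial 1 (partial 2 f) (y a t))
        (at a within UNIV)"
      using has_real_derivative_along_axis[OF smooth_2]
      by (simp add: y_def has_real_derivative_iff_has_vector_derivative)
  next
    show "(\<lambda>t. partial 2 f (y a t)) integrable_on cbox 0 b" for a
      by (intro integrable_continuous continuous_on_compose_smooth[OF smooth_2] continuous_y_a)
  next
    show "continuous_on (UNIV \<times> cbox 0 b) (\<lambda>(a, t). partial 1 (partial 2 f) (y a t))"
      using continuous_on_compose_smooth[OF smooth_12 continuous_y] by (simp add: case_prod_beta)
  qed auto
  moreover have "integral (cbox 0 b) (\<lambda>t. partial 2 f (y a t)) = f (y a b) - f (y a 0)" for a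
    using integral_partial_along_axis[OF assms, of 2 "p + a *\<^sub>R axis 1 1"]
    by (simp add: y_def cbox_interval algebra_simps)
  moreover have "((\<lambda>a. f (y a b) - f (y a 0)) has_vector_derivative
      partial 1 f (y 0 b) - partial 1 f (y 0 0)) (at 0)"
    using has_real_derivative_along_axis[OF assms(1), of "p + b *\<^sub>R axis 2 1" 1 0 UNIV]
      has_real_derivative_along_axis[OF assms(1), of p 1 0 UNIV]
    by (auto simp: y_def has_real_derivative_iff_has_vector_derivative intro!: derivative_eq_intros)
  ultimately show ?thesis
    using vector_derivative_unique_at by (simp add: y_def cbox_interval) blast
qed

lemma partial_commute:
  assumes "smooth f"
  shows "partial 1 (partial 2 f) x = partial 2 (partial 1 f) x"
proof -
  define p where "p = x - axis 2 1"
  have smooth_12: "smooth (partial 1 (partial 2 f))"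
    using assms smooth_partial by blast
  have "((\<lambda>b. integral {0..b} (\<lambda>t. partial 1 (partial 2 f) (p + t *\<^sub>R axis 2 1))) has_vector_derivative
      partial 1 (partial 2 f) (p + 1 *\<^sub>R axis 2 1)) (at 1 within {0..2})"
    by (intro integral_has_vector_derivative continuous_on_compose_smooth[OF smooth_12])
      (auto intro!: continuous_intros)
  then have "((\<lambda>b. integral {0..b} (\<lambda>t. partial 1 (partial 2 f) (p + t *\<^sub>R axis 2 1))) has_vector_derivative
      partial 1 (partial 2 f) x) (at 1 within {0..2})"
    by (simp add: p_def)
  then have "((\<lambda>b. partial 1 f (p + b *\<^sub>R axis 2 1) - partial 1 f p) has_vector_derivative
      partial 1 (partial 2 f) x) (at 1 within {0..2})"
    by (rule has_vector_derivative_transform_within[OF _ zero_less_one])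
      (auto simp: partial_increment_eq_integral_mixed[OF assms])
  moreover have "((\<lambda>b. partial 1 f (p + b *\<^sub>R axis 2 1) - partial 1 f p) has_vector_derivative
      partial 2 (partial 1 f) x) (at 1 within {0..2})"
    using has_real_derivative_along_axis[OF smooth_partial[OF assms, of 1], of p 2 1 "{0..2}"]
    by (auto simp: p_def has_real_derivative_iff_has_vector_derivative intro!: derivative_eq_intros)
  moreover have "at (1::real) within {0..2} = at 1"
    by (rule at_within_Icc_at) auto
  ultimately show ?thesis
    using vector_derivative_unique_at by metis
qed

section \<open>Integration over the unit square\<close>

definition vec2_of_pair :: "real \<times> real \<Rightarrow> real^2" where
  "vec2_of_pair p = fst p *\<^sub>R axis 1 1 + snd p *\<^sub>R axis 2 1"

definition pair_of_vec2 :: "real^2 \<Rightarrow> real \<times> real" where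
  "pair_of_vec2 x = (x$1, x$2)"

lemma vec2_of_pair_nth [simp]: "vec2_of_pair p $ 1 = fst p" "vec2_of_pair p $ 2 = snd p"
  by (simp_all add: vec2_of_pair_def axis_def)

lemma pair_of_vec2_inverse: "pair_of_vec2 (vec2_of_pair p) = p"
  by (simp add: pair_of_vec2_def)

lemma vec2_of_pair_inverse: "vec2_of_pair (pair_of_vec2 x) = x"
  by (simp add: pair_of_vec2_def vec2_of_pair_def vec_eq_iff forall_2 axis_def)

lemma mem_cbox_vec2: "(x::real^2) \<in> cbox a b \<longleftrightarrow> a$1 \<le> x$1 \<and> x$1 \<le> b$1 \<and> a$2 \<le> x$2 \<and> x$2 \<le> b$2"
  by (auto simp: mem_box_cart forall_2)

lemma mem_cbox_pair:
  "(x::real \<times> real) \<in> cbox a b \<longleftrightarrow> fst a \<le> fst x \<and> fst x \<le> fst b \<and> snd a \<le> snd x \<and> snd x \<le> snd b"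
  using cbox_Pair_eq[of "fst a" "snd a" "fst b" "snd b"] by (cases x) (auto simp: cbox_interval)

lemma image_vec2_of_pair_cbox: "vec2_of_pair ` cbox u v = cbox (vec2_of_pair u) (vec2_of_pair v)"
proof
  show "cbox (vec2_of_pair u) (vec2_of_pair v) \<subseteq> vec2_of_pair ` cbox u v"
  proof
    fix x
    assume "x \<in> cbox (vec2_of_pair u) (vec2_of_pair v)"
    then have "pair_of_vec2 x \<in> cbox u v"
      by (auto simp: mem_cbox_vec2 mem_cbox_pair pair_of_vec2_def)
    then show "x \<in> vec2_of_pair ` cbox u v"
      by (metis vec2_of_pair_inverse image_eqI)
  qed
qed (auto simp: mem_cbox_vec2 mem_cbox_pair)

lemma image_pair_of_vec2_cbox: "pair_of_vec2 ` cbox u v = cbox (pair_of_vec2 u) (pair_of_vec2 v)"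
proof
  show "cbox (pair_of_vec2 u) (pair_of_vec2 v) \<subseteq> pair_of_vec2 ` cbox u v"
  proof
    fix x
    assume "x \<in> cbox (pair_of_vec2 u) (pair_of_vec2 v)"
    then have "vec2_of_pair x \<in> cbox u v"
      by (auto simp: mem_cbox_vec2 mem_cbox_pair pair_of_vec2_def)
    then show "x \<in> pair_of_vec2 ` cbox u v"
      by (metis pair_of_vec2_inverse image_eqI)
  qed
qed (auto simp: mem_cbox_vec2 mem_cbox_pair pair_of_vec2_def)

lemma content_image_vec2_of_pair:
  "Henstock_Kurzweil_Integration.content (vec2_of_pair ` cbox u v)
    = 1 * Henstock_Kurzweil_Integration.content (cbox u v)"
proof -
  have empty: "cbox (vec2_of_pair u) (vec2_of_pair v) = {} \<longleftrightarrow> \<not> (fst u \<le> fst v \<and> snd u \<le> snd v)"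
    using interval_ne_empty_cart(1)[of "vec2_of_pair u" "vec2_of_pair v"] by (auto simp: forall_2)
  have "Henstock_Kurzweil_Integration.content (cbox u v)
      = Henstock_Kurzweil_Integration.content (cbox (fst u, snd u) (fst v, snd v))"
    by simp
  also have "\<dots> = Henstock_Kurzweil_Integration.content {fst u..fst v}
      * Henstock_Kurzweil_Integration.content {snd u..snd v}"
    by (subst content_Pair) (simp only: cbox_interval)
  finally show ?thesis
    unfolding image_vec2_of_pair_cbox content_cbox_if_cart using empty by (auto simp: sum_2 UNIV_2)
qed

lemma torus_int_iterated:
  fixes F :: "real^2 \<Rightarrow> real"
  assumes "continuous_on UNIV F"
  shows "torus_int F = integral {0..1} (\<lambda>a. integral {0..1} (\<lambda>b. F (a *\<^sub>R axis 1 1 + b *\<^sub>R axis 2 1)))"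
proof -
  have "(F has_integral torus_int F) (cbox (vec 0) (vec 1))"
    unfolding torus_int_def
    by (intro integrable_integral integrable_continuous continuous_on_subset[OF assms]) auto
  moreover have "continuous (at x) vec2_of_pair" for x
    unfolding vec2_of_pair_def by (auto intro!: continuous_intros)
  ultimately have "((\<lambda>x. F (vec2_of_pair x)) has_integral (1 / 1) *\<^sub>R torus_int F)
      (pair_of_vec2 ` cbox (vec 0) (vec 1))"
    using image_vec2_of_pair_cbox image_pair_of_vec2_cbox
    by (intro has_integral_twiddle[OF _ pair_of_vec2_inverse vec2_of_pair_inverse _ _ _
          content_image_vec2_of_pair]) (auto simp: pair_of_vec2_def)
  moreover have "pair_of_vec2 ` cbox (vec 0) (vec 1) = cbox (0, 0) (1, 1)"
    unfolding image_pair_of_vec2_cbox by (simp add: pair_of_vec2_def)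
  ultimately have "torus_int F = integral (cbox (0, 0) (1, 1)) (\<lambda>x. F (vec2_of_pair x))"
    by (simp add: integral_unique)
  also have "\<dots> = integral (cbox 0 1) (\<lambda>a. integral (cbox 0 1) (\<lambda>b. F (vec2_of_pair (a, b))))"
    by (intro integral_prod_continuous continuous_on_compose2[OF assms])
      (auto intro!: continuous_intros simp: vec2_of_pair_def)
  finally show ?thesis
    by (simp add: vec2_of_pair_def cbox_interval)
qed

lemma torus_int_iterated_swap:
  fixes F :: "real^2 \<Rightarrow> real"
  assumes "continuous_on UNIV F"
  shows "torus_int F = integral {0..1} (\<lambda>b. integral {0..1} (\<lambda>a. F (a *\<^sub>R axis 1 1 + b *\<^sub>R axis 2 1)))"
proof -
  have "integral (cbox 0 1) (\<lambda>a. integral (cbox 0 1) (\<lambda>b. F (a *\<^sub>R axis 1 1 + b *\<^sub>R axis 2 1))) =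
        integral (cbox 0 1) (\<lambda>b. integral (cbox 0 1) (\<lambda>a. F (a *\<^sub>R axis 1 1 + b *\<^sub>R axis 2 1)))"
    by (rule integral_swap_continuous)
      (auto intro!: continuous_on_compose2[OF assms] continuous_intros simp: case_prod_beta)
  then show ?thesis
    using torus_int_iterated[OF assms] by (simp add: cbox_interval)
qed

lemma torus_int_eq_line_integral:
  fixes F :: "real^2 \<Rightarrow> real"
  assumes "continuous_on UNIV F" and line: "\<And>x. integral {0..1} (\<lambda>t. F (x + t *\<^sub>R axis i 1)) = c"
  shows "torus_int F = c"
proof (cases "i = 1")
  case True
  have "integral {0..1} (\<lambda>a. F (a *\<^sub>R axis 1 1 + b *\<^sub>R axis 2 1)) = c" for b
    using line[of "b *\<^sub>R axis 2 1"] True by (simp add: add.commute)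
  then show ?thesis
    by (simp add: torus_int_iterated_swap[OF assms(1)])
next
  case False
  then have "i = 2"
    using exhaust_2 by blast
  then have "integral {0..1} (\<lambda>b. F (a *\<^sub>R axis 1 1 + b *\<^sub>R axis 2 1)) = c" for a
    using line[of "a *\<^sub>R axis 1 1"] by simp
  then show ?thesis
    by (simp add: torus_int_iterated[OF assms(1)])
qed

lemma torus_int_partial_eq_0:
  assumes "f \<in> Cinf_T2"
  shows "torus_int (partial i f) = 0"
proof (rule torus_int_eq_line_integral)
  have "smooth f" "periodic f"
    using assms by (simp_all add: Cinf_T2_def)
  then show "integral {0..1} (\<lambda>t. partial i f (x + t *\<^sub>R axis i 1)) = 0" for x
    by (simp add: integral_partial_along_axis periodic_def)
  show "continuous_on UNIV (partial i f)"
    using \<open>smooth f\<close> by (simp add: smooth_continuous_on smooth_partial)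
qed

lemma torus_int_component:
  fixes p :: "real^2 \<Rightarrow> real^2"
  assumes "continuous_on UNIV p"
  shows "torus_int p $ i = torus_int (\<lambda>x. p x $ i)"
proof -
  have "p integrable_on cbox (vec 0) (vec 1)"
    by (intro integrable_continuous continuous_on_subset[OF assms]) simp
  then show ?thesis
    by (simp add: torus_int_def)
qed

section \<open>Solenoidal fields as rotated gradients\<close>

definition rot :: "(real^2 \<Rightarrow> real) \<Rightarrow> real^2 \<Rightarrow> real^2" where
  "rot f x = (\<chi> j. if j = 1 then partial 2 f x else - partial 1 f x)"

lemma rot_nth: "rot f x $ 1 = partial 2 f x" "rot f x $ 2 = - partial 1 f x"
  by (simp_all add: rot_def)

lemma Pmat_mult_vec: "Pmat *v v = (\<chi> i. if i = 1 then - v$2 else v$1)"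
  by (simp add: Pmat_def matrix_vector_mult_def vec_eq_iff sum_2 forall_2)

lemma norm_Pmat_mult_vec: "norm (Pmat *v v) = norm v"
  by (simp add: norm_eq_sqrt_inner inner_vec_def sum_2 Pmat_mult_vec algebra_simps)

lemma grad_eq_Pmat_rot: "grad f x = Pmat *v rot f x"
  by (simp add: Pmat_mult_vec rot_def grad_def vec_eq_iff forall_2)

lemma rot_in_F_sol:
  assumes "f \<in> Cinf_T2"
  shows "rot f \<in> F_sol"
proof -
  have smooth: "smooth f"
    using assms by (simp add: Cinf_T2_def)
  have components: "(\<lambda>x. rot f x $ j) \<in> Cinf_T2" for j
    using exhaust_2[of j] Cinf_T2_partial[OF assms] Cinf_T2_uminus[OF Cinf_T2_partial[OF assms]]
    by (auto simp: rot_nth)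
  have "div2 (rot f) x = partial 1 (partial 2 f) x - partial 2 (partial 1 f) x" for x
    using smooth_differentiable[OF smooth_partial[OF smooth]]
    by (simp add: div2_def sum_2 rot_nth partial_uminus)
  then have "div2 (rot f) x = 0" for x
    by (simp add: partial_commute[OF smooth])
  moreover have "torus_int (rot f) = 0"
  proof -
    have "continuous_on UNIV (rot f)"
      using components by (intro continuous_on_vector_field) (simp add: Cinf_T2_def)
    then have "torus_int (rot f) $ j = torus_int (\<lambda>x. rot f x $ j)" for j
      by (rule torus_int_component)
    then show ?thesis
      using torus_int_partial_eq_0[OF assms]
      by (simp add: vec_eq_iff forall_2 rot_nth torus_int_def)
  qed
  ultimately show ?thesis
    using components by (simp add: F_sol_def)
qed

definition radial_potential :: "(real^2 \<Rightarrow> real^2) \<Rightarrow> real^2 \<Rightarrow> real" where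
  "radial_potential q x = integral {0..1} (\<lambda>t. q (t *\<^sub>R x) \<bullet> x)"

definition radial_integrand_grad :: "(real^2 \<Rightarrow> real^2) \<Rightarrow> real^2 \<Rightarrow> real \<Rightarrow> real^2" where
  "radial_integrand_grad q x t =
    q (t *\<^sub>R x) + t *\<^sub>R (x$1 *\<^sub>R grad (\<lambda>y. q y $ 1) (t *\<^sub>R x) + x$2 *\<^sub>R grad (\<lambda>y. q y $ 2) (t *\<^sub>R x))"

lemma has_derivative_radial_integrand:
  fixes q :: "real^2 \<Rightarrow> real^2"
  assumes smooth: "\<And>i. smooth (\<lambda>y. q y $ i)"
  shows "((\<lambda>x. q (t *\<^sub>R x) \<bullet> x) has_derivative (\<lambda>h. h \<bullet> radial_integrand_grad q x t)) (at x within S)"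
proof -
  have scale: "((\<lambda>x. t *\<^sub>R x) has_derivative (\<lambda>h. t *\<^sub>R h)) (at x within S)"
    by (auto intro!: derivative_eq_intros)
  have component: "((\<lambda>x. q (t *\<^sub>R x) $ i * x $ i) has_derivative
      (\<lambda>h. q (t *\<^sub>R x) $ i * h $ i + (grad (\<lambda>y. q y $ i) (t *\<^sub>R x) \<bullet> (t *\<^sub>R h)) * x $ i)) (at x within S)"
    for i
    using has_derivative_compose[OF scale has_derivative_grad[OF smooth_differentiable[OF smooth]]]
      bounded_linear_imp_has_derivative[OF bounded_linear_vec_nth]
    by (rule has_derivative_mult)
  have "(\<lambda>x. q (t *\<^sub>R x) \<bullet> x) = (\<lambda>x. q (t *\<^sub>R x) $ 1 * x $ 1 + q (t *\<^sub>R x) $ 2 * x $ 2)"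
    by (simp add: inner_vec_def sum_2)
  moreover have "(\<lambda>h. h \<bullet> radial_integrand_grad q x t) =
    (\<lambda>h. (q (t *\<^sub>R x) $ 1 * h $ 1 + (grad (\<lambda>y. q y $ 1) (t *\<^sub>R x) \<bullet> (t *\<^sub>R h)) * x $ 1) +
         (q (t *\<^sub>R x) $ 2 * h $ 2 + (grad (\<lambda>y. q y $ 2) (t *\<^sub>R x) \<bullet> (t *\<^sub>R h)) * x $ 2))"
    by (simp add: inner_vec_def sum_2 radial_integrand_grad_def algebra_simps)
  ultimately show ?thesis
    using has_derivative_add[OF component component] by simp
qed

lemma continuous_on_radial_integrand_grad:
  fixes q :: "real^2 \<Rightarrow> real^2"
  assumes smooth: "\<And>i. smooth (\<lambda>y. q y $ i)"
  shows "continuous_on S (\<lambda>z. radial_integrand_grad q (fst z) (snd z))"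
  unfolding radial_integrand_grad_def
  by (intro continuous_intros continuous_on_compose2[OF continuous_on_vector_field[OF smooth]]
      continuous_on_compose2[OF continuous_on_grad[OF smooth]]) auto

text \<open>For a curl-free field the j-th component of the radial integrand gradient is the
  t-derivative of t q_j(t x), hence it integrates to q_j(x) over [0, 1].\<close>

lemma has_integral_radial_integrand_grad:
  fixes q :: "real^2 \<Rightarrow> real^2"
  assumes smooth: "\<And>i. smooth (\<lambda>y. q y $ i)"
    and curl_free: "\<And>y. partial 2 (\<lambda>y. q y $ 1) y = partial 1 (\<lambda>y. q y $ 2) y"
  shows "((\<lambda>t. radial_integrand_grad q x t $ j) has_integral q x $ j) {0..1}"
proof -
  let ?f = "\<lambda>y. q y $ j"
  have "radial_integrand_grad q x t $ j = 1 * ?f (0 + t *\<^sub>R x) + (grad ?f (0 + t *\<^sub>R x) \<bullet> x) * t" for t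
    using exhaust_2[of j] curl_free[of "t *\<^sub>R x"]
    by (auto simp: radial_integrand_grad_def inner_vec_def sum_2 grad_def algebra_simps)
  moreover have "((\<lambda>t. t * ?f (0 + t *\<^sub>R x)) has_real_derivative
      1 * ?f (0 + t *\<^sub>R x) + (grad ?f (0 + t *\<^sub>R x) \<bullet> x) * t) (at t within {0..1})" for t
    by (rule DERIV_mult[OF DERIV_ident has_real_derivative_along_line[OF smooth]])
  ultimately have "((\<lambda>t. radial_integrand_grad q x t $ j) has_integral 1 * ?f (1 *\<^sub>R x) - 0 * ?f (0 *\<^sub>R x))
      {0..1}"
    by (intro fundamental_theorem_of_calculus) (auto simp: has_real_derivative_iff_has_vector_derivative)
  then show ?thesis
    by simp
qed

lemma has_derivative_radial_potential:
  fixes q :: "real^2 \<Rightarrow> real^2"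
  assumes smooth: "\<And>i. smooth (\<lambda>y. q y $ i)"
    and curl_free: "\<And>y. partial 2 (\<lambda>y. q y $ 1) y = partial 1 (\<lambda>y. q y $ 2) y"
  shows "(radial_potential q has_derivative (\<lambda>h. q x \<bullet> h)) (at x)"
proof -
  let ?G = "\<lambda>x t. blinfun_inner_left (radial_integrand_grad q x t)"
  have continuous_G: "continuous_on S (\<lambda>z. ?G (fst z) (snd z))" for S
    by (rule continuous_on_compose2[OF linear_continuous_on[OF bounded_linear_blinfun_inner_left]
          continuous_on_radial_integrand_grad[OF smooth]]) auto
  have "(radial_potential q has_derivative integral (cbox 0 1) (?G x)) (at x within UNIV)"
    unfolding radial_potential_def[abs_def] cbox_interval[symmetric]
  proof (rule leibniz_rule[where fx = ?G])
    show "((\<lambda>x. q (t *\<^sub>R x) \<bullet> x) has_derivative blinfun_apply (?G x t)) (at x within UNIV)" for x t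
      using has_derivative_radial_integrand[OF smooth] by simp
    show "(\<lambda>t. q (t *\<^sub>R x) \<bullet> x) integrable_on cbox 0 1" for x
      by (intro integrable_continuous continuous_intros
          continuous_on_compose2[OF continuous_on_vector_field[OF smooth]]) auto
    show "continuous_on (UNIV \<times> cbox 0 1) (\<lambda>(x, t). ?G x t)"
      using continuous_G by (simp add: case_prod_beta)
  qed auto
  moreover have "blinfun_apply (integral (cbox 0 1) (?G x)) h = q x \<bullet> h" for h
  proof -
    have "continuous_on (cbox 0 1) (\<lambda>t. (\<lambda>z. ?G (fst z) (snd z)) (x, t))"
      by (rule continuous_on_compose2[OF continuous_G[of UNIV]]) (auto intro!: continuous_intros)
    then have "?G x integrable_on cbox 0 1"
      by (simp add: cbox_interval integrable_continuous_real)
    then have "blinfun_apply (integral (cbox 0 1) (?G x)) h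
        = integral {0..1} (\<lambda>t. h$1 * radial_integrand_grad q x t $ 1 + h$2 * radial_integrand_grad q x t $ 2)"
      by (simp add: blinfun_apply_integral inner_vec_def sum_2 cbox_interval)
    also have "\<dots> = h$1 * q x $ 1 + h$2 * q x $ 2"
      by (intro integral_unique has_integral_add has_integral_mult_right
          has_integral_radial_integrand_grad[OF smooth curl_free])
    finally show ?thesis
      by (simp add: inner_vec_def sum_2 mult.commute)
  qed
  ultimately show ?thesis
    by (metis ext)
qed

lemma partial_eq_component:
  assumes "\<And>x. (g has_derivative (\<lambda>h. q x \<bullet> h)) (at x)"
  shows "partial i g x = q x $ i"
  using partial_eq_derivative[OF assms[of x]] by (simp add: inner_axis)

lemma smooth_if_has_derivative_smooth:
  assumes deriv: "\<And>x. (g has_derivative (\<lambda>h. q x \<bullet> h)) (at x)"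
    and smooth: "\<And>i. smooth (\<lambda>y. q y $ i)"
  shows "smooth g"
  unfolding smooth_def
proof
  fix k
  have "partial i g = (\<lambda>y. q y $ i)" for i
    using partial_eq_component[OF deriv] by (rule ext)
  moreover have "g differentiable (at x)" for x
    using deriv unfolding differentiable_def by blast
  moreover have "continuous_on UNIV g"
    using deriv has_derivative_continuous continuous_at_imp_continuous_on by blast
  ultimately show "Ck k g"
    using smooth_imp_Ck[OF smooth] by (cases k) simp_all
qed

text \<open>The increments of a potential of a periodic field are constant; integrating along a side of
  the unit square identifies them with the means of the field.\<close>

lemma periodic_if_has_derivative_mean_zero:
  fixes q :: "real^2 \<Rightarrow> real^2"
  assumes deriv: "\<And>x. (g has_derivative (\<lambda>h. q x \<bullet> h)) (at x)"
    and Cinf: "\<And>i. (\<lambda>y. q y $ i) \<in> Cinf_T2"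
    and mean_zero: "\<And>i. torus_int (\<lambda>y. q y $ i) = 0"
  shows "periodic g"
  unfolding periodic_def
proof (intro allI)
  fix x j
  have smooth: "smooth (\<lambda>y. q y $ i)" for i
    using Cinf by (simp add: Cinf_T2_def)
  have q_periodic: "q (y + axis j 1) = q y" for y
    using Cinf by (simp add: Cinf_T2_def periodic_def vec_eq_iff)
  have "((\<lambda>y. g (y + axis j 1) - g y) has_derivative (\<lambda>h. 0)) (at y within UNIV)" for y
  proof -
    have "((\<lambda>y. y + axis j 1) has_derivative (\<lambda>h. h)) (at y)"
      by (auto intro!: derivative_eq_intros)
    from has_derivative_diff[OF has_derivative_compose[OF this deriv] deriv]
    show ?thesis
      by (simp add: q_periodic)
  qed
  then have "\<exists>c. \<forall>y. g (y + axis j 1) - g y = c"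
    using has_derivative_zero_constant[of UNIV] by auto
  then obtain c where c: "\<And>y. g (y + axis j 1) - g y = c"
    by blast
  have "integral {0..1} (\<lambda>t. q (y + t *\<^sub>R axis j 1) $ j) = c" for y
    using integral_partial_along_axis[OF smooth_if_has_derivative_smooth[OF deriv smooth], of 1 j y] c[of y]
    by (simp add: partial_eq_component[OF deriv])
  then have "torus_int (\<lambda>y. q y $ j) = c"
    by (intro torus_int_eq_line_integral smooth_continuous_on smooth)
  then show "g (x + axis j 1) = g x"
    using c[of x] mean_zero[of j] by simp
qed

lemma curl_free_has_periodic_potential:
  fixes q :: "real^2 \<Rightarrow> real^2"
  assumes Cinf: "\<And>i. (\<lambda>y. q y $ i) \<in> Cinf_T2"
    and curl_free: "\<And>y. partial 2 (\<lambda>y. q y $ 1) y = partial 1 (\<lambda>y. q y $ 2) y"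
    and mean_zero: "\<And>i. torus_int (\<lambda>y. q y $ i) = 0"
  shows "\<exists>g\<in>Cinf_T2. \<forall>x. grad g x = q x"
proof -
  have smooth: "smooth (\<lambda>y. q y $ i)" for i
    using Cinf by (simp add: Cinf_T2_def)
  note deriv = has_derivative_radial_potential[OF smooth curl_free]
  have "radial_potential q \<in> Cinf_T2"
    using smooth_if_has_derivative_smooth[OF deriv smooth]
      periodic_if_has_derivative_mean_zero[OF deriv Cinf mean_zero]
    by (simp add: Cinf_T2_def)
  moreover have "grad (radial_potential q) x = q x" for x
    by (simp add: grad_def partial_eq_component[OF deriv] vec_eq_iff)
  ultimately show ?thesis
    by blast
qed

lemma F_sol_Pmat_has_periodic_potential:
  assumes "p \<in> F_sol"
  shows "\<exists>g\<in>Cinf_T2. \<forall>x. grad g x = Pmat *v p x"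
proof -
  have Cinf: "(\<lambda>x. p x $ i) \<in> Cinf_T2" and div_free: "div2 p x = 0"
    and mean_zero: "torus_int p = 0" for i x
    using assms by (simp_all add: F_sol_def)
  have smooth: "smooth (\<lambda>x. p x $ i)" for i
    using Cinf by (simp add: Cinf_T2_def)
  have Pp_nth: "(\<lambda>y. (Pmat *v p y) $ 1) = (\<lambda>y. - p y $ 2)" "(\<lambda>y. (Pmat *v p y) $ 2) = (\<lambda>y. p y $ 1)"
    by (simp_all add: Pmat_mult_vec)
  have "(\<lambda>y. (Pmat *v p y) $ i) \<in> Cinf_T2" for i
    using exhaust_2[of i] Cinf Cinf_T2_uminus[OF Cinf] by (auto simp: Pp_nth)
  moreover have "partial 2 (\<lambda>y. (Pmat *v p y) $ 1) y = partial 1 (\<lambda>y. (Pmat *v p y) $ 2) y" for y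
    using div_free[of y] smooth_differentiable[OF smooth]
    by (simp add: Pp_nth partial_uminus div2_def sum_2 add_eq_0_iff)
  moreover have "torus_int (\<lambda>y. (Pmat *v p y) $ i) = 0" for i
  proof -
    have "torus_int (\<lambda>y. p y $ i) = 0" for i
      using torus_int_component[OF continuous_on_vector_field[OF smooth], of i] mean_zero by simp
    then show ?thesis
      using exhaust_2[of i] by (auto simp: Pp_nth torus_int_def)
  qed
  ultimately show ?thesis
    by (rule curl_free_has_periodic_potential)
qed

lemma F_sol_eq_image_rot: "F_sol = rot ` Cinf_T2"
proof
  show "F_sol \<subseteq> rot ` Cinf_T2"
  proof
    fix p
    assume "p \<in> F_sol"
    then obtain g where g: "g \<in> Cinf_T2" and grad_g: "\<And>x. grad g x = Pmat *v p x"
      using F_sol_Pmat_has_periodic_potential by blast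
    have "partial i g x = (Pmat *v p x) $ i" for i x
      using arg_cong[OF grad_g[of x], of "\<lambda>v. v $ i"] by (simp add: grad_def)
    then have "p = rot g"
      by (simp add: rot_def fun_eq_iff vec_eq_iff forall_2 Pmat_mult_vec)
    with g show "p \<in> rot ` Cinf_T2"
      by blast
  qed
qed (use rot_in_F_sol in blast)

lemma qQ_eq_qD_Pmat: "qQ U l = qD (\<lambda>x. - U x) (Pmat *v l)"
proof -
  have rotate: "norm (l - rot f x) = norm (Pmat *v l - grad f x)" for f x
    by (metis grad_eq_Pmat_rot matrix_vector_mult_diff_distrib norm_Pmat_mult_vec)
  show ?thesis
    unfolding qQ_def qD_def F_sol_eq_image_rot image_image rotate by simp
qed

section \<open>The quadratic form of D\<close>

lemma torus_int_pos:
  fixes w :: "real^2 \<Rightarrow> real"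
  assumes "continuous_on UNIV w" "\<And>x. 0 < w x"
  shows "0 < torus_int w"
proof -
  let ?S = "cbox (vec 0) (vec 1) :: (real^2) set"
  have continuous: "continuous_on ?S w"
    using assms(1) continuous_on_subset by blast
  obtain x0 where "x0 \<in> ?S" and min: "\<And>y. y \<in> ?S \<Longrightarrow> w x0 \<le> w y"
    using continuous_attains_inf[OF compact_cbox _ continuous] by (auto simp: interval_ne_empty_cart)
  have "w x0 = integral ?S (\<lambda>x. w x0)"
    by (simp add: content_cbox_cart interval_ne_empty_cart)
  also have "\<dots> \<le> torus_int w"
    unfolding torus_int_def using min by (intro integral_le integrable_continuous continuous) auto
  finally show ?thesis
    using assms(2)[of x0] by linarith
qed

definition qD_quotient :: "(real^2 \<Rightarrow> real) \<Rightarrow> real^2 \<Rightarrow> (real^2 \<Rightarrow> real) \<Rightarrow> real" where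
  "qD_quotient W l f =
    torus_int (\<lambda>x. (norm (l - grad f x))\<^sup>2 * exp (-2 * W x)) / torus_int (\<lambda>x. exp (-2 * W x))"

lemma qD_eq_INF_quotient: "qD W l = (INF f\<in>Cinf_T2. qD_quotient W l f)"
  by (simp add: qD_def qD_quotient_def)

context
  fixes W :: "real^2 \<Rightarrow> real"
  assumes continuous_W: "continuous_on UNIV W"
begin

lemma torus_int_weight_pos: "0 < torus_int (\<lambda>x. exp (-2 * W x))"
  using continuous_W by (intro torus_int_pos continuous_intros) auto

lemma integrable_energy:
  assumes "f \<in> Cinf_T2"
  shows "(\<lambda>x. (norm (l - grad f x))\<^sup>2 * exp (-2 * W x)) integrable_on cbox (vec 0) (vec 1)"
proof -
  have "continuous_on UNIV (grad f)"
    using assms by (simp add: Cinf_T2_def continuous_on_grad)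
  then have "continuous_on UNIV (\<lambda>x. (norm (l - grad f x))\<^sup>2 * exp (-2 * W x))"
    using continuous_W by (intro continuous_intros)
  then show ?thesis
    by (rule integrable_continuous[OF continuous_on_subset]) auto
qed

lemma qD_quotient_nonneg:
  assumes "f \<in> Cinf_T2"
  shows "0 \<le> qD_quotient W l f"
  unfolding qD_quotient_def
  using torus_int_weight_pos integral_nonneg[OF integrable_energy[OF assms]]
  by (simp add: torus_int_def)

lemma qD_le_quotient: "f \<in> Cinf_T2 \<Longrightarrow> qD W l \<le> qD_quotient W l f"
  unfolding qD_eq_INF_quotient using qD_quotient_nonneg by (intro cINF_lower bdd_belowI2) auto

lemma qD_greatest: "(\<And>f. f \<in> Cinf_T2 \<Longrightarrow> c \<le> qD_quotient W l f) \<Longrightarrow> c \<le> qD W l"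
  unfolding qD_eq_INF_quotient using Cinf_T2_const by (intro cINF_greatest) auto

lemma qD_nonneg: "0 \<le> qD W l"
  using qD_quotient_nonneg by (intro qD_greatest)

lemma qD_quotient_zero: "qD_quotient W l (\<lambda>x. 0) = (norm l)\<^sup>2"
  using torus_int_weight_pos by (simp add: qD_quotient_def grad_const torus_int_def)

lemma qD_quotient_scale:
  assumes "f \<in> Cinf_T2"
  shows "qD_quotient W (t *\<^sub>R l) (\<lambda>x. t * f x) = t\<^sup>2 * qD_quotient W l f"
proof -
  have "smooth f"
    using assms by (simp add: Cinf_T2_def)
  then have "t *\<^sub>R l - grad (\<lambda>x. t * f x) x = t *\<^sub>R (l - grad f x)" for x
    by (simp add: grad_cmult algebra_simps)
  then show ?thesis
    by (simp add: qD_quotient_def torus_int_def power_mult_distrib mult.assoc)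
qed

lemma qD_quotient_parallelogram:
  assumes f: "f \<in> Cinf_T2" and g: "g \<in> Cinf_T2"
  shows "qD_quotient W (l + m) (\<lambda>x. f x + g x) + qD_quotient W (l - m) (\<lambda>x. f x - g x)
    = 2 * qD_quotient W l f + 2 * qD_quotient W m g"
proof -
  have "smooth f" "smooth g"
    using f g by (simp_all add: Cinf_T2_def)
  let ?E = "\<lambda>l f x. (norm (l - grad f x))\<^sup>2 * exp (-2 * W x)"
  have pointwise: "?E (l + m) (\<lambda>x. f x + g x) x + ?E (l - m) (\<lambda>x. f x - g x) x
      = 2 * ?E l f x + 2 * ?E m g x" for x
  proof -
    let ?a = "l - grad f x" and ?b = "m - grad g x"
    have "l + m - grad (\<lambda>x. f x + g x) x = ?a + ?b" "l - m - grad (\<lambda>x. f x - g x) x = ?a - ?b"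
      using \<open>smooth f\<close> \<open>smooth g\<close> by (simp_all add: grad_add grad_diff algebra_simps)
    moreover have "((norm (?a + ?b))\<^sup>2 + (norm (?a - ?b))\<^sup>2) * exp (-2 * W x)
        = (2 * (norm ?a)\<^sup>2 + 2 * (norm ?b)\<^sup>2) * exp (-2 * W x)"
      by (simp only: norm_parallelogram)
    ultimately show ?thesis
      by (simp only: distrib_right mult.assoc)
  qed
  have "torus_int (?E (l + m) (\<lambda>x. f x + g x)) + torus_int (?E (l - m) (\<lambda>x. f x - g x))
      = torus_int (\<lambda>x. 2 * ?E l f x + 2 * ?E m g x)"
    unfolding torus_int_def pointwise[symmetric]
    using Cinf_T2_add[OF f g] Cinf_T2_diff[OF f g] by (intro integral_add[symmetric] integrable_energy)
  also have "\<dots> = 2 * torus_int (?E l f) + 2 * torus_int (?E m g)"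
  proof -
    have "(\<lambda>x. 2 * ?E l f x) integrable_on cbox (vec 0) (vec 1)"
      "(\<lambda>x. 2 * ?E m g x) integrable_on cbox (vec 0) (vec 1)"
      using integrable_on_cmult_left[OF integrable_energy[OF f], of 2]
        integrable_on_cmult_left[OF integrable_energy[OF g], of 2] by simp_all
    then show ?thesis
      unfolding torus_int_def by (simp only: integral_add integral_mult_right)
  qed
  finally show ?thesis
    by (simp add: qD_quotient_def add_divide_distrib[symmetric])
qed

lemma qD_scale_le:
  assumes "t \<noteq> 0"
  shows "qD W (t *\<^sub>R l) \<le> t\<^sup>2 * qD W l"
proof -
  have "qD W (t *\<^sub>R l) / t\<^sup>2 \<le> qD W l"
  proof (rule qD_greatest)
    fix f
    assume f: "f \<in> Cinf_T2"
    have "qD W (t *\<^sub>R l) \<le> t\<^sup>2 * qD_quotient W l f"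
      using qD_le_quotient[OF Cinf_T2_cmult[OF f]] qD_quotient_scale[OF f] by metis
    then show "qD W (t *\<^sub>R l) / t\<^sup>2 \<le> qD_quotient W l f"
      using assms by (simp add: divide_le_eq mult.commute)
  qed
  then show ?thesis
    using assms by (simp add: divide_le_eq mult.commute)
qed

lemma qD_scale: "qD W (t *\<^sub>R l) = t\<^sup>2 * qD W l"
proof (cases "t = 0")
  case True
  then show ?thesis
    using qD_le_quotient[OF Cinf_T2_const[of 0], of 0] qD_quotient_zero[of 0] qD_nonneg[of 0] by simp
next
  case False
  have "qD W l = qD W (inverse t *\<^sub>R (t *\<^sub>R l))"
    using False by simp
  also have "\<dots> \<le> (inverse t)\<^sup>2 * qD W (t *\<^sub>R l)"
    using False by (intro qD_scale_le) simp
  finally have "t\<^sup>2 * qD W l \<le> qD W (t *\<^sub>R l)"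
    using False by (simp add: power_inverse field_simps)
  then show ?thesis
    using qD_scale_le[OF False, of l] by simp
qed

lemma qD_parallelogram_le: "qD W (l + m) + qD W (l - m) \<le> 2 * qD W l + 2 * qD W m"
proof -
  let ?L = "qD W (l + m) + qD W (l - m)"
  have "?L \<le> 2 * qD_quotient W l f + 2 * qD_quotient W m g" if f: "f \<in> Cinf_T2" and g: "g \<in> Cinf_T2" for f g
    using qD_le_quotient[OF Cinf_T2_add[OF f g], of "l + m"]
      qD_le_quotient[OF Cinf_T2_diff[OF f g], of "l - m"]
      qD_quotient_parallelogram[OF f g, of l m] by linarith
  then have "(?L - 2 * qD_quotient W m g) / 2 \<le> qD W l" if "g \<in> Cinf_T2" for g
    using that by (intro qD_greatest) force
  then have "(?L - 2 * qD W l) / 2 \<le> qD W m"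
    by (intro qD_greatest) force
  then show ?thesis
    by simp
qed

lemma qD_parallelogram: "qD W (l + m) + qD W (l - m) = 2 * qD W l + 2 * qD W m"
proof -
  have "qD W ((l + m) + (l - m)) + qD W ((l + m) - (l - m)) \<le> 2 * qD W (l + m) + 2 * qD W (l - m)"
    by (rule qD_parallelogram_le)
  moreover have "(l + m) + (l - m) = 2 *\<^sub>R l" "(l + m) - (l - m) = 2 *\<^sub>R m"
    by (simp_all add: scaleR_2 algebra_simps)
  ultimately have "4 * qD W l + 4 * qD W m \<le> 2 * qD W (l + m) + 2 * qD W (l - m)"
    by (simp add: qD_scale)
  then show ?thesis
    using qD_parallelogram_le[of l m] by linarith
qed

lemma qD_symmetric_matrix: "\<exists>M. transpose M = M \<and> (\<forall>l. l \<bullet> (M *v l) = qD W l)"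
  by (rule parallelogram_law_imp_symmetric_matrix) (simp_all add: qD_scale qD_parallelogram qD_nonneg)

end

theorem proposition4p4:
  fixes U :: "real^2 \<Rightarrow> real"
  assumes "U \<in> Cinf_T2"
  shows "Qmat U = transpose Pmat ** Dmat (\<lambda>x. - U x) ** Pmat"
proof -
  have "continuous_on UNIV (\<lambda>x. - U x)"
    using assms by (simp add: Cinf_T2_def smooth_continuous_on continuous_on_minus)
  then obtain D where D: "transpose D = D" "\<And>l. l \<bullet> (D *v l) = qD (\<lambda>x. - U x) l"
    using qD_symmetric_matrix by blast
  then have Dmat: "Dmat (\<lambda>x. - U x) = D"
    unfolding Dmat_def by (rule the_symmetric_matrix_eq)
  have "transpose (transpose Pmat ** D ** Pmat) = transpose Pmat ** D ** Pmat"
    by (simp add: matrix_transpose_mul D(1) matrix_mul_assoc)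
  moreover have "l \<bullet> ((transpose Pmat ** D ** Pmat) *v l) = qQ U l" for l
  proof -
    have "l \<bullet> ((transpose Pmat ** D ** Pmat) *v l) = l \<bullet> (transpose Pmat *v (D *v (Pmat *v l)))"
      by (metis matrix_vector_mul_assoc)
    also have "\<dots> = qD (\<lambda>x. - U x) (Pmat *v l)"
      by (simp only: inner_transpose_mult_vec D(2))
    finally show ?thesis
      by (simp add: qQ_eq_qD_Pmat)
  qed
  ultimately show ?thesis
    unfolding Qmat_def Dmat by (rule the_symmetric_matrix_eq)
qed

end
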